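(* Consider any Monteiro–Svaiter iteration (as defined in the context; in particular $x_0=v_0$). Then for all $k\ge0$, $$\|x_k-x^*\|_{\mathbf{M}}\le\frac{2-\sigma}{1-\sigma}\sqrt{2p_0}\quad\text{and}\quad\|v_k-x^*\|_{\mathbf{M}}\le\sqrt{2p_0}.$$
   Context: Let $\mathbf{M}\in\mathbb{R}^{d\times d}$ be symmetric positive semidefinite with Moore–Penrose pseudoinverse $\mathbf{M}^\dagger$; write $\|x\|_{\mathbf{M}}=\sqrt{x^\top\mathbf{M}x}$ and $\|x\|_{\mathbf{M}^\dagger}=\sqrt{x^\top\mathbf{M}^\dagger x}$. Let $f:\mathbb{R}^d\to\mathbb{R}$ be strictly convex and differentiable with $\nabla f(x)\in\operatorname{Im}(\mathbf{M})$ for all $x$, with a minimizer $x^*$, and fix $\sigma\in[0,1)$. A Monteiro–Svaiter iteration consists of $A_0\ge0$, $x_0=v_0\in\mathbb{R}^d$, and for each $k\ge0$ a number $\lambda_{k+1}>0$ and points $y_k,x_{k+1}\in\mathbb{R}^d$ such that, with $a_{k+1}=\frac{\lambda_{k+1}+\sqrt{\lambda_{k+1}^2+4\lambda_{k+1}A_k}}{2}$, one has $y_k=\frac{A_k}{A_k+a_{k+1}}x_k+\frac{a_{k+1}}{A_k+a_{k+1}}v_k$ and $\|x_{k+1}-(y_k-\lambda_{k+1}\mathbf{M}^\dagger\nabla f(x_{k+1}))\|_{\mathbf{M}}\le\sigma\|x_{k+1}-y_k\|_{\mathbf{M}}$; then $v_{k+1}=v_k-a_{k+1}\mathbf{M}^\dagger\nabla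 f(x_{k+1})$ and $A_{k+1}=A_k+a_{k+1}$. The potential is $p_k=A_k(f(x_k)-f(x^* ))+\frac12\|v_k-x^*\|_{\mathbf{M}}^2$. *)

theory Defs
  imports "HOL-Analysis.Analysis"
begin

definition mp_pinv :: "real^'n^'n \<Rightarrow> real^'n^'n" where
  "mp_pinv A = (THE X. A ** X ** A = A \<and> X ** A ** X = X \<and>
                      transpose (A ** X) = A ** X \<and> transpose (X ** A) = X ** A)"

definition psd :: "real^'n^'n \<Rightarrow> bool" where
  "psd M \<longleftrightarrow> transpose M = M \<and> (\<forall>x. 0 \<le> x \<bullet> (M *v x))"

definition mnorm :: "real^'n^'n \<Rightarrow> real^'n \<Rightarrow> real" where
  "mnorm M x = sqrt (x \<bullet> (M *v x))"

definition strictly_convex :: "(real^'n \<Rightarrow> real) \<Rightarrow> bool" where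
  "strictly_convex f \<longleftrightarrow> (\<forall>x y t. x \<noteq> y \<longrightarrow> 0 < t \<longrightarrow> t < 1 \<longrightarrow>
      f ((1 - t) *\<^sub>R x + t *\<^sub>R y) < (1 - t) * f x + t * f y)"

end

theory Submission
  imports Defs
begin

text \<open>The potential \<open>p\<^sub>k\<close> is nonincreasing: the gradient inequality at \<open>x\<^sub>k\<^sub>+\<^sub>1\<close>
  (convexity is all that is used of \<open>f\<close>), the identity \<open>a\<^sub>k\<^sub>+\<^sub>1\<^sup>2 = \<lambda>\<^sub>k\<^sub>+\<^sub>1 A\<^sub>k\<^sub>+\<^sub>1\<close> and the
  inexactness criterion show that it even drops by \<open>(1 - \<sigma>\<^sup>2)/2 \<cdot> A\<^sub>k\<^sub>+\<^sub>1/\<lambda>\<^sub>k\<^sub>+\<^sub>1 \<cdot> \<parallel>x\<^sub>k\<^sub>+\<^sub>1 - y\<^sub>k\<parallel>\<^sup>2\<close>.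
  Here \<open>M M\<^sup>\<dagger>\<close> fixes the range of \<open>M\<close>, so \<open>\<langle>M\<^sup>\<dagger>\<nabla>f(z), w\<rangle>\<^sub>M = \<nabla>f(z) \<bullet> w\<close>.
  Monotonicity of \<open>p\<^sub>k\<close> bounds \<open>\<parallel>v\<^sub>k - x\<^sup>*\<parallel>\<^sub>M\<close> by \<open>\<surd>(2p\<^sub>0)\<close>. Moreover \<open>x\<^sub>k\<^sub>+\<^sub>1 - x\<^sup>*\<close> is
  the convex combination \<open>(A\<^sub>k (x\<^sub>k - x\<^sup>*) + a\<^sub>k\<^sub>+\<^sub>1 (v\<^sub>k\<^sub>+\<^sub>1 - x\<^sup>*))/A\<^sub>k\<^sub>+\<^sub>1\<close> plus a residual of
  \<open>M\<close>-norm at most \<open>\<sigma>\<parallel>x\<^sub>k\<^sub>+\<^sub>1 - y\<^sub>k\<parallel>\<^sub>M\<close>, which the potential drop bounds by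
  \<open>a\<^sub>k\<^sub>+\<^sub>1/A\<^sub>k\<^sub>+\<^sub>1 \<cdot> \<surd>(2p\<^sub>0)/(1 - \<sigma>)\<close>; induction on \<open>k\<close> then gives the bound on \<open>x\<^sub>k\<close>.\<close>

definition is_pseudoinverse :: "real^'n^'n \<Rightarrow> real^'n^'n \<Rightarrow> bool" where
  "is_pseudoinverse A X \<longleftrightarrow> A ** X ** A = A \<and> X ** A ** X = X \<and>
     transpose (A ** X) = A ** X \<and> transpose (X ** A) = X ** A"

lemma symmetric_matrix_inner_commute:
  fixes M :: "real^'n^'n"
  assumes "transpose M = M"
  shows "(M *v u) \<bullet> w = u \<bullet> (M *v w)"
  by (metis assms dot_lmul_matrix inner_commute transpose_matrix_vector)

lemma orthogonal_projection_matrix_exists: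
  fixes V :: "(real^'n) set"
  assumes "subspace V"
  obtains P :: "real^'n^'n"
  where "transpose P = P" "\<And>x. P *v x \<in> V" "\<And>v. v \<in> V \<Longrightarrow> P *v v = v"
proof -
  obtain T where T_orth: "pairwise orthogonal T" and T_unit: "\<And>x. x \<in> T \<Longrightarrow> norm x = 1"
    and T_span: "span T = V"
    using orthonormal_basis_subspace[OF assms] by metis
  define P :: "real^'n^'n" where "P = (\<chi> i j. \<Sum>b\<in>T. b$i * b$j)"
  have P_apply: "P *v x = (\<Sum>b\<in>T. (b \<bullet> x) *\<^sub>R b)" for x
    unfolding P_def
    by (simp add: vec_eq_iff matrix_vector_mult_def inner_vec_def sum_component
        sum_distrib_left sum_distrib_right sum.swap[of _ T] algebra_simps)
  have P_range: "P *v x \<in> V" for x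
    unfolding P_apply T_span[symmetric] by (intro span_sum span_mul span_base)
  moreover have "P *v v = v" if "v \<in> V" for v
  proof -
    have "(\<Sum>b\<in>T. (b \<bullet> v / (b \<bullet> b)) *\<^sub>R b) = P *v v"
      unfolding P_apply using T_unit by (intro sum.cong) (auto simp: norm_eq_1)
    then have "orthogonal (v - P *v v) (v - P *v v)"
      using Gram_Schmidt_step[OF T_orth, of "v - P *v v" v] T_span that P_range assms
      by (simp add: subspace_diff)
    then show ?thesis by (simp add: orthogonal_def)
  qed
  moreover have "transpose P = P"
    unfolding P_def by (simp add: vec_eq_iff transpose_def mult.commute)
  ultimately show ?thesis using that by blast
qed

lemma is_pseudoinverse_unique:
  assumes X: "is_pseudoinverse A X" and Y: "is_pseudoinverse A Y"
  shows "X = Y"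
proof -
  have x1: "A ** X ** A = A" and x2: "X ** A ** X = X" and x3: "transpose (A ** X) = A ** X"
    and x4: "transpose (X ** A) = X ** A" using X by (auto simp: is_pseudoinverse_def)
  have y1: "A ** Y ** A = A" and y2: "Y ** A ** Y = Y" and y3: "transpose (A ** Y) = A ** Y"
    and y4: "transpose (Y ** A) = Y ** A" using Y by (auto simp: is_pseudoinverse_def)
  have "X = X ** transpose (A ** X)" using x2 x3 by (simp add: matrix_mul_assoc)
  also have "\<dots> = X ** (transpose X ** transpose (A ** Y ** A))" using y1 by (simp add: matrix_transpose_mul)
  also have "\<dots> = X ** transpose (A ** X) ** transpose (A ** Y)"
    by (simp add: matrix_transpose_mul matrix_mul_assoc)
  also have "\<dots> = X ** A ** Y" using x3 y3 x2 by (simp add: matrix_mul_assoc)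
  finally have X_eq: "X = X ** A ** Y" .
  have "Y = transpose (Y ** A) ** Y" using y2 y4 by simp
  also have "\<dots> = transpose (A ** X ** A) ** transpose Y ** Y" using x1 by (simp add: matrix_transpose_mul)
  also have "\<dots> = transpose (X ** A) ** transpose (Y ** A) ** Y"
    by (simp add: matrix_transpose_mul matrix_mul_assoc)
  also have "\<dots> = X ** A ** (Y ** A ** Y)" using x4 y4 by (simp add: matrix_mul_assoc)
  also have "\<dots> = X ** A ** Y" using y2 by simp
  finally show ?thesis using X_eq by simp
qed

text \<open>With \<open>P\<close> the orthogonal projection onto the range of \<open>M\<close>, the matrix
  \<open>N = M + (1 - P)\<close> is invertible and commutes with \<open>P\<close>, and \<open>P N\<^sup>-\<^sup>1\<close> is the pseudoinverse.\<close>
lemma is_pseudoinverse_exists_symmetric: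
  fixes M :: "real^'n^'n"
  assumes M_sym: "transpose M = M"
  shows "\<exists>X. is_pseudoinverse M X"
proof -
  have "subspace (range ((*v) M))"
    by (simp add: linear_subspace_image matrix_vector_mul_linear)
  then obtain P where P_sym: "transpose P = P" and P_range: "\<And>x. P *v x \<in> range ((*v) M)"
    and P_id: "\<And>v. v \<in> range ((*v) M) \<Longrightarrow> P *v v = v"
    using orthogonal_projection_matrix_exists by blast
  have PP: "P ** P = P" and PM: "P ** M = M"
    using P_range P_id by (simp_all add: matrix_eq matrix_vector_mul_assoc[symmetric])
  have MP: "M ** P = M"
    using arg_cong[OF PM, of transpose] by (simp add: matrix_transpose_mul P_sym M_sym)
  have P_ker: "P *v x = 0" if "M *v x = 0" for x
  proof -
    obtain u where u: "P *v x = M *v u" using P_range[of x] by auto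
    have "(P *v x) \<bullet> (P *v x) = x \<bullet> (P *v (P *v x))"
      using symmetric_matrix_inner_commute[OF P_sym] by simp
    also have "\<dots> = u \<bullet> (M *v x)"
      using u symmetric_matrix_inner_commute[OF M_sym] by (simp add: P_id inner_commute)
    finally show ?thesis using that by simp
  qed
  define N where "N = M + (mat 1 - P)"
  have N_apply: "N *v x = M *v x + x - P *v x" for x
    unfolding N_def by (simp add: algebra_simps)
  have NP: "N ** P = M" and PN: "P ** N = M"
    using PP PM MP by (simp_all add: matrix_eq matrix_vector_mul_assoc[symmetric] N_apply
        algebra_simps)
  have "x = 0" if "N *v x = 0" for x
  proof -
    have "M *v x = P *v (N *v x)"
      using PP PM by (simp add: N_apply algebra_simps matrix_vector_mul_assoc)
    then show ?thesis using that P_ker N_apply by simp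
  qed
  then obtain Ni where NiN: "Ni ** N = mat 1"
    using matrix_left_invertible_ker by blast
  then have NNi: "N ** Ni = mat 1" by (simp add: matrix_left_right_inverse)
  have PNi: "P ** Ni = Ni ** P"
  proof -
    have "P ** Ni = Ni ** (N ** P) ** Ni" using NiN by (simp add: matrix_mul_assoc)
    also have "\<dots> = Ni ** (P ** N) ** Ni" using NP PN by simp
    also have "\<dots> = Ni ** P ** (N ** Ni)" by (simp add: matrix_mul_assoc)
    finally show ?thesis using NNi by simp
  qed
  have MX: "M ** (P ** Ni) = P"
  proof -
    have "M ** (P ** Ni) = N ** (P ** P) ** Ni" by (simp add: NP matrix_mul_assoc)
    also have "\<dots> = N ** (Ni ** P)" by (metis PP PNi matrix_mul_assoc)
    finally show ?thesis using NNi by (simp add: matrix_mul_assoc)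
  qed
  have XM: "P ** Ni ** M = P"
  proof -
    have "P ** Ni ** M = P ** (Ni ** N) ** P" by (metis NP matrix_mul_assoc)
    then show ?thesis using NiN PP by simp
  qed
  have "P ** Ni ** M ** (P ** Ni) = P ** Ni"
    using XM PP by (metis matrix_mul_assoc)
  then have "is_pseudoinverse M (P ** Ni)"
    unfolding is_pseudoinverse_def using MX XM PM P_sym by simp
  then show ?thesis by blast
qed

lemma mp_pinv_is_pseudoinverse:
  "transpose M = M \<Longrightarrow> is_pseudoinverse M (mp_pinv M)"
proof -
  assume "transpose M = M"
  then have "\<exists>!X. is_pseudoinverse M X"
    using is_pseudoinverse_exists_symmetric is_pseudoinverse_unique by blast
  moreover have "mp_pinv M = (THE X. is_pseudoinverse M X)"
    by (simp add: mp_pinv_def is_pseudoinverse_def)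
  ultimately show ?thesis by (simp add: theI')
qed

lemma mp_pinv_right_inverse_on_range:
  fixes M :: "real^'n^'n"
  assumes "transpose M = M" "z \<in> range ((*v) M)"
  shows "M *v (mp_pinv M *v z) = z"
  using assms mp_pinv_is_pseudoinverse[OF assms(1)]
  by (auto simp: is_pseudoinverse_def matrix_vector_mul_assoc)

definition minner :: "real^'n^'n \<Rightarrow> real^'n \<Rightarrow> real^'n \<Rightarrow> real" where
  "minner M u w = u \<bullet> (M *v w)"

lemma minner_commute: "psd M \<Longrightarrow> minner M u w = minner M w u"
  unfolding minner_def psd_def by (metis inner_commute symmetric_matrix_inner_commute)

lemma minner_simps:
  "minner M (u + v) w = minner M u w + minner M v w"
  "minner M (u - v) w = minner M u w - minner M v w"
  "minner M u (v + w) = minner M u v + minner M u w"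
  "minner M u (v - w) = minner M u v - minner M u w"
  "minner M (c *\<^sub>R u) w = c * minner M u w"
  "minner M u (c *\<^sub>R w) = c * minner M u w"
  unfolding minner_def by (simp_all add: algebra_simps inner_add_left inner_diff_left)

lemma minner_self_nonneg: "psd M \<Longrightarrow> 0 \<le> minner M u u"
  unfolding minner_def psd_def by simp

lemma mnorm_power2: "psd M \<Longrightarrow> (mnorm M u)\<^sup>2 = minner M u u"
  unfolding mnorm_def using minner_self_nonneg[of M u] by (simp add: minner_def)

lemma mnorm_nonneg: "psd M \<Longrightarrow> 0 \<le> mnorm M u"
  unfolding mnorm_def psd_def by simp

lemma mnorm_scaleR: "mnorm M (c *\<^sub>R u) = \<bar>c\<bar> * mnorm M u"
proof -
  have "(c *\<^sub>R u) \<bullet> (M *v (c *\<^sub>R u)) = c\<^sup>2 * (u \<bullet> (M *v u))"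
    by (simp add: algebra_simps power2_eq_square)
  then show ?thesis unfolding mnorm_def by (simp add: real_sqrt_mult)
qed

lemma minner_expand_add:
  "psd M \<Longrightarrow> minner M (u + w) (u + w) = minner M u u + 2 * minner M u w + minner M w w"
  using minner_commute[of M u w] by (simp add: minner_simps)

lemma mnorm_add_scaleR_power2:
  assumes psd: "psd M"
  shows "(mnorm M (u + c *\<^sub>R w))\<^sup>2 = (mnorm M u)\<^sup>2 + 2 * c * minner M w u + c\<^sup>2 * minner M w w"
  unfolding mnorm_power2[OF psd] minner_expand_add[OF psd]
  using minner_commute[OF psd, of u w] by (simp add: minner_simps power2_eq_square)

lemma minner_Cauchy_Schwarz:
  assumes psd: "psd M"
  shows "(minner M u w)\<^sup>2 \<le> minner M u u * minner M w w"
proof -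
  have quadratic: "0 \<le> minner M u u - 2 * t * minner M u w + t\<^sup>2 * minner M w w" for t
  proof -
    have "0 \<le> minner M (u - t *\<^sub>R w) (u - t *\<^sub>R w)" by (rule minner_self_nonneg[OF psd])
    then show ?thesis
      using minner_commute[OF psd, of w u] by (simp add: minner_simps power2_eq_square algebra_simps)
  qed
  show ?thesis
  proof (cases "minner M w w = 0")
    case True
    have "minner M u w = 0"
    proof (rule ccontr)
      assume "minner M u w \<noteq> 0"
      then show False
        using quadratic[of "(minner M u u + 1) / (2 * minner M u w)"] True by (simp add: field_simps)
    qed
    then show ?thesis using True by simp
  next
    case False
    then have pos: "0 < minner M w w" using minner_self_nonneg[OF psd, of w] by simp
    have "0 \<le> minner M u u - (minner M u w)\<^sup>2 / minner M w w"
      using quadratic[of "minner M u w / minner M w w"] pos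
      by (simp add: field_simps power2_eq_square)
    then show ?thesis using pos by (simp add: field_simps)
  qed
qed

lemma mnorm_triangle:
  assumes psd: "psd M"
  shows "mnorm M (u + w) \<le> mnorm M u + mnorm M w"
proof -
  have "minner M u w \<le> sqrt ((minner M u w)\<^sup>2)" by simp
  also have "\<dots> \<le> sqrt (minner M u u * minner M w w)"
    using minner_Cauchy_Schwarz[OF psd] real_sqrt_le_mono by blast
  also have "\<dots> = mnorm M u * mnorm M w"
    unfolding mnorm_def minner_def by (simp add: real_sqrt_mult)
  finally have "(mnorm M (u + w))\<^sup>2 \<le> (mnorm M u + mnorm M w)\<^sup>2"
    by (simp add: mnorm_power2[OF psd] minner_expand_add[OF psd] power2_sum)
  then show ?thesis
    using mnorm_nonneg[OF psd, of u] mnorm_nonneg[OF psd, of w] by (meson add_nonneg_nonneg power2_le_imp_le)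
qed

lemma strictly_convex_imp_convex_on:
  assumes "strictly_convex f"
  shows "convex_on UNIV f"
proof (rule convex_onI)
  fix t :: real and p q assume "0 < t" "t < 1"
  then show "f ((1 - t) *\<^sub>R p + t *\<^sub>R q) \<le> (1 - t) * f p + t * f q"
    using assms unfolding strictly_convex_def
    by (cases "p = q") (auto simp: algebra_simps less_imp_le simp flip: scaleR_add_left)
qed simp

lemma convex_on_has_derivative_above_tangent:
  fixes f :: "'a::real_normed_vector \<Rightarrow> real"
  assumes convex: "convex_on UNIV f" and deriv: "(f has_derivative D) (at x)"
  shows "D (z - x) \<le> f z - f x"
proof -
  define \<phi> where "\<phi> t = f (x + t *\<^sub>R (z - x))" for t
  have "convex_on UNIV \<phi>"
  proof (rule convex_onI)
    fix t a b :: real assume t: "0 < t" "t < 1"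
    have "x + ((1 - t) *\<^sub>R a + t *\<^sub>R b) *\<^sub>R (z - x)
        = (1 - t) *\<^sub>R (x + a *\<^sub>R (z - x)) + t *\<^sub>R (x + b *\<^sub>R (z - x))"
      by (simp add: algebra_simps)
    then show "\<phi> ((1 - t) *\<^sub>R a + t *\<^sub>R b) \<le> (1 - t) * \<phi> a + t * \<phi> b"
      unfolding \<phi>_def using convex_onD[OF convex, of t] t by simp
  qed simp
  moreover have "(\<phi> has_field_derivative D (z - x)) (at 0)"
  proof -
    have "((\<lambda>t. x + t *\<^sub>R (z - x)) has_derivative (\<lambda>h. h *\<^sub>R (z - x))) (at 0)"
      by (auto intro!: derivative_eq_intros)
    moreover have "(f has_derivative D) (at (x + 0 *\<^sub>R (z - x)))" using deriv by simp
    ultimately have "(\<phi> has_derivative (\<lambda>h. D (h *\<^sub>R (z - x)))) (at 0)"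
      unfolding \<phi>_def by (rule has_derivative_compose)
    moreover have "D (h *\<^sub>R (z - x)) = D (z - x) * h" for h
      using linear_scale[OF has_derivative_linear[OF deriv]] by simp
    ultimately show ?thesis by (simp add: has_field_derivative_def)
  qed
  ultimately have "\<phi> 1 - \<phi> 0 \<ge> D (z - x) * (1 - 0)"
    by (intro convex_on_imp_above_tangent[where A = UNIV]) auto
  then show ?thesis unfolding \<phi>_def by simp
qed

lemma mult_le_div_one_minus:
  fixes \<sigma> t K :: real
  assumes "0 \<le> \<sigma>" "\<sigma> < 1" "0 \<le> t" "0 \<le> K" "(1 - \<sigma>\<^sup>2) * t\<^sup>2 \<le> K\<^sup>2"
  shows "\<sigma> * t \<le> K / (1 - \<sigma>)"
proof -
  have "\<sigma>\<^sup>2 * (1 - \<sigma>)\<^sup>2 \<le> 1 - \<sigma>\<^sup>2"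
  proof -
    have "\<sigma>\<^sup>2 * (1 - \<sigma>) \<le> 1 + \<sigma>"
      using assms by (smt (verit) mult_left_le power_le_one zero_le_power2)
    then have "(1 - \<sigma>) * (\<sigma>\<^sup>2 * (1 - \<sigma>)) \<le> (1 - \<sigma>) * (1 + \<sigma>)"
      using assms by (intro mult_left_mono) auto
    then show ?thesis by (simp add: power2_eq_square algebra_simps)
  qed
  then have "\<sigma>\<^sup>2 * (1 - \<sigma>)\<^sup>2 * t\<^sup>2 \<le> (1 - \<sigma>\<^sup>2) * t\<^sup>2"
    by (rule mult_right_mono) simp
  then have "(\<sigma> * t * (1 - \<sigma>))\<^sup>2 \<le> (1 - \<sigma>\<^sup>2) * t\<^sup>2"
    by (simp add: power_mult_distrib mult.commute mult.left_commute)
  then have "(\<sigma> * t * (1 - \<sigma>))\<^sup>2 \<le> K\<^sup>2" using assms by linarith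
  then have "\<sigma> * t * (1 - \<sigma>) \<le> K" using assms power2_le_imp_le by blast
  then show ?thesis using assms by (simp add: field_simps)
qed

locale monteiro_svaiter =
  fixes M :: "real^'n^'n"
    and f :: "real^'n \<Rightarrow> real"
    and g :: "real^'n \<Rightarrow> real^'n"
    and xs :: "real^'n"
    and \<sigma> :: real
    and A a lam :: "nat \<Rightarrow> real"
    and x v y :: "nat \<Rightarrow> real^'n"
  assumes M_psd: "psd M"
    and f_convex: "convex_on UNIV f"
    and f_grad: "\<And>z. (f has_derivative (\<lambda>h. g z \<bullet> h)) (at z)"
    and grad_im: "\<And>z. g z \<in> range (\<lambda>u. M *v u)"
    and xs_min: "\<And>z. f xs \<le> f z"
    and sigma_nonneg: "0 \<le> \<sigma>" and sigma_less_1: "\<sigma> < 1"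
    and A0_nonneg: "0 \<le> A 0"
    and x0: "x 0 = v 0"
    and lam_pos: "\<And>k. 0 < lam (Suc k)"
    and a_def: "\<And>k. a (Suc k) =
        (lam (Suc k) + sqrt ((lam (Suc k))\<^sup>2 + 4 * lam (Suc k) * A k)) / 2"
    and y_def: "\<And>k. y k = (A k / (A k + a (Suc k))) *\<^sub>R x k
                         + (a (Suc k) / (A k + a (Suc k))) *\<^sub>R v k"
    and inexact: "\<And>k. mnorm M (x (Suc k) - (y k - lam (Suc k) *\<^sub>R (mp_pinv M *v g (x (Suc k)))))
                       \<le> \<sigma> * mnorm M (x (Suc k) - y k)"
    and v_step: "\<And>k. v (Suc k) = v k - a (Suc k) *\<^sub>R (mp_pinv M *v g (x (Suc k)))"
    and A_step: "\<And>k. A (Suc k) = A k + a (Suc k)"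
begin

definition pgrad :: "nat \<Rightarrow> real^'n" where
  "pgrad k = mp_pinv M *v g (x (Suc k))"

definition potential :: "nat \<Rightarrow> real" where
  "potential k = A k * (f (x k) - f xs) + 1/2 * (mnorm M (v k - xs))\<^sup>2"

lemma minner_pgrad: "minner M (pgrad k) z = g (x (Suc k)) \<bullet> z"
proof -
  have M_sym: "transpose M = M" using M_psd by (simp add: psd_def)
  have "M *v pgrad k = g (x (Suc k))"
    unfolding pgrad_def using mp_pinv_right_inverse_on_range[OF M_sym grad_im] .
  moreover have "minner M (pgrad k) z = (M *v pgrad k) \<bullet> z"
    by (simp add: minner_def symmetric_matrix_inner_commute[OF M_sym])
  ultimately show ?thesis by simp
qed

lemma gradient_le: "g (x (Suc k)) \<bullet> (z - x (Suc k)) \<le> f z - f (x (Suc k))"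
  using convex_on_has_derivative_above_tangent[OF f_convex f_grad] .

lemma A_nonneg: "0 \<le> A k"
proof (induction k)
  case (Suc k)
  then show ?case using A_step[of k] a_def[of k] lam_pos[of k] by simp
qed (rule A0_nonneg)

lemma a_pos: "0 < a (Suc k)"
proof -
  have "0 \<le> sqrt ((lam (Suc k))\<^sup>2 + 4 * lam (Suc k) * A k)"
    using lam_pos[of k] A_nonneg[of k] by simp
  then show ?thesis
    unfolding a_def[of k] using lam_pos[of k] by (intro divide_pos_pos add_pos_nonneg) auto
qed

lemma A_Suc_pos: "0 < A (Suc k)"
  using A_step[of k] A_nonneg[of k] a_pos[of k] by simp

text \<open>\<open>a\<^sub>k\<^sub>+\<^sub>1\<close> is the positive root of \<open>a\<^sup>2 = \<lambda>\<^sub>k\<^sub>+\<^sub>1 (A\<^sub>k + a)\<close>.\<close>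
lemma a_Suc_squared: "(a (Suc k))\<^sup>2 = lam (Suc k) * A (Suc k)"
proof -
  define s where "s = sqrt ((lam (Suc k))\<^sup>2 + 4 * lam (Suc k) * A k)"
  have "s\<^sup>2 = (lam (Suc k))\<^sup>2 + 4 * lam (Suc k) * A k"
    unfolding s_def using A_nonneg[of k] lam_pos[of k] by simp
  moreover have "s = 2 * a (Suc k) - lam (Suc k)" using a_def[of k] s_def by simp
  ultimately show ?thesis unfolding A_step by algebra
qed

lemma y_convex_combination: "A (Suc k) *\<^sub>R y k = A k *\<^sub>R x k + a (Suc k) *\<^sub>R v k"
  using A_Suc_pos[of k] unfolding y_def A_step by (simp add: scaleR_add_right)

lemma v_dist_Suc:
  "(mnorm M (v (Suc k) - xs))\<^sup>2 = (mnorm M (v k - xs))\<^sup>2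
     - 2 * a (Suc k) * minner M (pgrad k) (v k - xs) + (a (Suc k))\<^sup>2 * minner M (pgrad k) (pgrad k)"
proof -
  have "v (Suc k) - xs = (v k - xs) + (- a (Suc k)) *\<^sub>R pgrad k"
    using v_step[of k] by (simp add: pgrad_def)
  then show ?thesis by (simp only: mnorm_add_scaleR_power2[OF M_psd]) simp
qed

text \<open>The gradient inequality at \<open>x\<^sub>k\<^sub>+\<^sub>1\<close>, tested against \<open>x\<^sup>*\<close> with weight \<open>a\<^sub>k\<^sub>+\<^sub>1\<close>
  and against \<open>x\<^sub>k\<close> with weight \<open>A\<^sub>k\<close>.\<close>
lemma minner_pgrad_v_dist_lower_bound:
  "A (Suc k) * (f (x (Suc k)) - f xs) - A k * (f (x k) - f xs)
     - A (Suc k) * minner M (pgrad k) (x (Suc k) - y k)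
   \<le> a (Suc k) * minner M (pgrad k) (v k - xs)"
proof -
  have split: "a (Suc k) *\<^sub>R (v k - xs) = a (Suc k) *\<^sub>R (x (Suc k) - xs)
      + A k *\<^sub>R (x (Suc k) - x k) - A (Suc k) *\<^sub>R (x (Suc k) - y k)"
    using y_convex_combination[of k] A_step[of k] by (simp add: algebra_simps)
  have "a (Suc k) * (f (x (Suc k)) - f xs) \<le> a (Suc k) * minner M (pgrad k) (x (Suc k) - xs)"
    using gradient_le[of k xs] a_pos[of k] by (simp add: minner_pgrad inner_diff_right)
  moreover have "A k * (f (x (Suc k)) - f (x k)) \<le> A k * minner M (pgrad k) (x (Suc k) - x k)"
    using gradient_le[of k "x k"] A_nonneg[of k]
    by (intro mult_left_mono) (simp_all add: minner_pgrad inner_diff_right)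
  moreover have "a (Suc k) * minner M (pgrad k) (v k - xs) =
      a (Suc k) * minner M (pgrad k) (x (Suc k) - xs) + A k * minner M (pgrad k) (x (Suc k) - x k)
      - A (Suc k) * minner M (pgrad k) (x (Suc k) - y k)"
    using arg_cong[OF split, of "minner M (pgrad k)"] by (simp add: minner_simps)
  ultimately show ?thesis using A_step[of k] by (simp add: algebra_simps)
qed

lemma inexact_expanded:
  "(mnorm M (x (Suc k) - y k))\<^sup>2 + 2 * lam (Suc k) * minner M (pgrad k) (x (Suc k) - y k)
     + (lam (Suc k))\<^sup>2 * minner M (pgrad k) (pgrad k)
   \<le> \<sigma>\<^sup>2 * (mnorm M (x (Suc k) - y k))\<^sup>2"
proof -
  have "(mnorm M ((x (Suc k) - y k) + lam (Suc k) *\<^sub>R pgrad k))\<^sup>2 \<le> (\<sigma> * mnorm M (x (Suc k) - y k))\<^sup>2"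
    using inexact[of k] mnorm_nonneg[OF M_psd]
    by (intro power_mono) (simp_all add: pgrad_def algebra_simps)
  then show ?thesis by (simp add: mnorm_add_scaleR_power2[OF M_psd] power_mult_distrib)
qed

lemma potential_Suc_le:
  "potential (Suc k) + (1 - \<sigma>\<^sup>2) / 2 * (A (Suc k) / lam (Suc k)) * (mnorm M (x (Suc k) - y k))\<^sup>2
   \<le> potential k"
proof -
  define c where "c = A (Suc k) / (2 * lam (Suc k))"
  define S where "S = (mnorm M (x (Suc k) - y k))\<^sup>2"
  define W where "W = minner M (pgrad k) (x (Suc k) - y k)"
  define U where "U = minner M (pgrad k) (pgrad k)"
  have "c * (S + 2 * lam (Suc k) * W + (lam (Suc k))\<^sup>2 * U) \<le> c * (\<sigma>\<^sup>2 * S)"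
    using inexact_expanded[of k] A_Suc_pos[of k] lam_pos[of k]
    unfolding c_def S_def W_def U_def by (intro mult_left_mono) auto
  moreover have "c * (S + 2 * lam (Suc k) * W + (lam (Suc k))\<^sup>2 * U)
      = c * S + A (Suc k) * W + (a (Suc k))\<^sup>2 / 2 * U"
  proof -
    have "c * (2 * lam (Suc k)) = A (Suc k)"
      using lam_pos[of k] by (simp add: c_def)
    moreover have "c * (lam (Suc k))\<^sup>2 = (a (Suc k))\<^sup>2 / 2"
      using lam_pos[of k] unfolding a_Suc_squared by (simp add: c_def power2_eq_square)
    moreover have "c * (S + 2 * lam (Suc k) * W + (lam (Suc k))\<^sup>2 * U)
        = c * S + (c * (2 * lam (Suc k))) * W + (c * (lam (Suc k))\<^sup>2) * U"
      by (simp add: algebra_simps)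
    ultimately show ?thesis by simp
  qed
  moreover have "(1 - \<sigma>\<^sup>2) / 2 * (A (Suc k) / lam (Suc k)) * S = c * S - c * (\<sigma>\<^sup>2 * S)"
    using lam_pos[of k] by (simp add: c_def field_simps)
  ultimately show ?thesis
    using v_dist_Suc[of k] minner_pgrad_v_dist_lower_bound[of k]
    unfolding potential_def S_def[symmetric] W_def[symmetric] U_def[symmetric] by linarith
qed

lemma potential_nonneg: "0 \<le> potential k"
  unfolding potential_def using A_nonneg[of k] xs_min[of "x k"] by simp

lemma potential_le_potential_0: "potential k \<le> potential 0"
proof (induction k)
  case (Suc k)
  have "0 \<le> (1 - \<sigma>\<^sup>2) / 2 * (A (Suc k) / lam (Suc k)) * (mnorm M (x (Suc k) - y k))\<^sup>2"
    using sigma_nonneg sigma_less_1 A_Suc_pos[of k] lam_pos[of k] by (simp add: power_le_one)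
  then show ?case using potential_Suc_le[of k] Suc by linarith
qed simp

lemma v_dist_le: "mnorm M (v k - xs) \<le> sqrt (2 * potential 0)"
proof -
  have "(mnorm M (v k - xs))\<^sup>2 \<le> 2 * potential k"
    unfolding potential_def using A_nonneg[of k] xs_min[of "x k"] by simp
  then have "(mnorm M (v k - xs))\<^sup>2 \<le> 2 * potential 0"
    using potential_le_potential_0[of k] by linarith
  then show ?thesis using mnorm_nonneg[OF M_psd] by (simp add: real_le_rsqrt)
qed

lemma x_Suc_decomposition:
  "x (Suc k) - xs = (A k / A (Suc k)) *\<^sub>R (x k - xs) + (a (Suc k) / A (Suc k)) *\<^sub>R (v (Suc k) - xs)
     + (x (Suc k) - (y k - lam (Suc k) *\<^sub>R pgrad k))"
proof -
  have A_pos: "A (Suc k) \<noteq> 0" using A_Suc_pos[of k] by simp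
  have lam: "lam (Suc k) = a (Suc k) * a (Suc k) / A (Suc k)"
    using a_Suc_squared[of k] A_pos by (simp add: field_simps power2_eq_square)
  have y: "y k = (A k / A (Suc k)) *\<^sub>R x k + (a (Suc k) / A (Suc k)) *\<^sub>R v k"
    using y_def[of k] unfolding A_step[of k, symmetric] .
  have "(A k / A (Suc k)) *\<^sub>R (x k - xs) + (a (Suc k) / A (Suc k)) *\<^sub>R (v (Suc k) - xs)
      = y k - lam (Suc k) *\<^sub>R pgrad k - (A k / A (Suc k) + a (Suc k) / A (Suc k)) *\<^sub>R xs"
    by (simp add: y lam v_step pgrad_def algebra_simps)
  moreover have "A k / A (Suc k) + a (Suc k) / A (Suc k) = 1"
    using A_pos by (simp add: A_step[of k] add_divide_distrib[symmetric])
  ultimately show ?thesis by simp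
qed

lemma inexact_residual_le:
  "mnorm M (x (Suc k) - (y k - lam (Suc k) *\<^sub>R pgrad k))
   \<le> a (Suc k) / A (Suc k) * sqrt (2 * potential 0) / (1 - \<sigma>)"
proof -
  define r where "r = a (Suc k) / A (Suc k)"
  define S where "S = mnorm M (x (Suc k) - y k)"
  have r_pos: "0 < r" using a_pos[of k] A_Suc_pos[of k] by (simp add: r_def)
  have "A (Suc k) / lam (Suc k) = 1 / r\<^sup>2"
    using a_Suc_squared[of k] A_Suc_pos[of k] lam_pos[of k] a_pos[of k]
    by (simp add: r_def power_divide field_simps power2_eq_square)
  moreover have "(1 - \<sigma>\<^sup>2) / 2 * (A (Suc k) / lam (Suc k)) * S\<^sup>2 \<le> potential 0"
    using potential_Suc_le[of k] potential_nonneg[of "Suc k"] potential_le_potential_0[of k]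
    unfolding S_def by linarith
  ultimately have "(1 - \<sigma>\<^sup>2) / 2 * (1 / r\<^sup>2) * S\<^sup>2 \<le> potential 0" by simp
  then have "2 * r\<^sup>2 * ((1 - \<sigma>\<^sup>2) / 2 * (1 / r\<^sup>2) * S\<^sup>2) \<le> 2 * r\<^sup>2 * potential 0"
    by (intro mult_left_mono) simp_all
  moreover have "2 * r\<^sup>2 * ((1 - \<sigma>\<^sup>2) / 2 * (1 / r\<^sup>2) * S\<^sup>2) = (1 - \<sigma>\<^sup>2) * S\<^sup>2"
    using r_pos by (simp add: field_simps)
  moreover have "2 * r\<^sup>2 * potential 0 = (r * sqrt (2 * potential 0))\<^sup>2"
    using potential_nonneg[of 0] by (simp add: power_mult_distrib)
  ultimately have "(1 - \<sigma>\<^sup>2) * S\<^sup>2 \<le> (r * sqrt (2 * potential 0))\<^sup>2" by simp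
  then have "\<sigma> * S \<le> r * sqrt (2 * potential 0) / (1 - \<sigma>)"
    using sigma_nonneg sigma_less_1 r_pos potential_nonneg[of 0] mnorm_nonneg[OF M_psd]
    by (intro mult_le_div_one_minus) (simp_all add: S_def)
  then show ?thesis
    using inexact[of k] unfolding r_def S_def pgrad_def by linarith
qed

lemma x_dist_le: "mnorm M (x k - xs) \<le> (2 - \<sigma>) / (1 - \<sigma>) * sqrt (2 * potential 0)"
proof -
  define V where "V = sqrt (2 * potential 0)"
  have bound_eq: "(2 - \<sigma>) / (1 - \<sigma>) * V = V + V / (1 - \<sigma>)"
    using sigma_less_1 by (simp add: field_simps)
  show ?thesis
    unfolding V_def[symmetric] bound_eq
  proof (induction k)
    case 0
    have "0 \<le> V / (1 - \<sigma>)" using potential_nonneg[of 0] sigma_less_1 by (simp add: V_def)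
    then show ?case using v_dist_le[of 0] x0 by (simp add: V_def)
  next
    case (Suc k)
    define p q where "p = A k / A (Suc k)" and "q = a (Suc k) / A (Suc k)"
    have "p \<ge> 0" "q \<ge> 0" "p + q = 1"
      using A_nonneg[of k] a_pos[of k] A_Suc_pos[of k]
      by (simp_all add: p_def q_def A_step[of k] add_divide_distrib[symmetric])
    define R where "R = x (Suc k) - (y k - lam (Suc k) *\<^sub>R pgrad k)"
    have "mnorm M (x (Suc k) - xs) \<le> mnorm M (p *\<^sub>R (x k - xs) + q *\<^sub>R (v (Suc k) - xs)) + mnorm M R"
      using x_Suc_decomposition[of k, folded p_def q_def R_def] mnorm_triangle[OF M_psd] by simp
    also have "\<dots> \<le> p * mnorm M (x k - xs) + q * mnorm M (v (Suc k) - xs) + mnorm M R"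
      using mnorm_triangle[OF M_psd, of "p *\<^sub>R (x k - xs)" "q *\<^sub>R (v (Suc k) - xs)"]
        \<open>p \<ge> 0\<close> \<open>q \<ge> 0\<close> by (simp add: mnorm_scaleR)
    also have "\<dots> \<le> p * (V + V / (1 - \<sigma>)) + q * V + q * V / (1 - \<sigma>)"
    proof -
      have "p * mnorm M (x k - xs) \<le> p * (V + V / (1 - \<sigma>))"
        using Suc \<open>p \<ge> 0\<close> by (rule mult_left_mono)
      moreover have "q * mnorm M (v (Suc k) - xs) \<le> q * V"
        using v_dist_le[of "Suc k"] \<open>q \<ge> 0\<close> unfolding V_def by (rule mult_left_mono)
      moreover have "mnorm M R \<le> q * V / (1 - \<sigma>)"
        using inexact_residual_le[of k] unfolding R_def V_def q_def .
      ultimately show ?thesis by linarith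
    qed
    also have "\<dots> = (p + q) * (V + V / (1 - \<sigma>))"
      by (simp add: algebra_simps add_divide_distrib)
    also have "\<dots> = V + V / (1 - \<sigma>)"
      using \<open>p + q = 1\<close> by simp
    finally show ?case .
  qed
qed

end


theorem mainTheorem19:
  fixes M :: "real^'n^'n"
    and f :: "real^'n \<Rightarrow> real"
    and g :: "real^'n \<Rightarrow> real^'n"
    and xs :: "real^'n"
    and \<sigma> :: real
    and A a lam :: "nat \<Rightarrow> real"
    and x v y :: "nat \<Rightarrow> real^'n"
  assumes M_psd: "psd M"
    and f_sconv: "strictly_convex f"
    and f_grad: "\<And>z. (f has_derivative (\<lambda>h. g z \<bullet> h)) (at z)"
    and grad_im: "\<And>z. g z \<in> range (\<lambda>u. M *v u)"
    and xs_min: "\<And>z. f xs \<le> f z"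
    and sigma: "0 \<le> \<sigma>" "\<sigma> < 1"
    and A0: "0 \<le> A 0"
    and x0: "x 0 = v 0"
    and lam_pos: "\<And>k. 0 < lam (Suc k)"
    and a_def: "\<And>k. a (Suc k) =
        (lam (Suc k) + sqrt ((lam (Suc k))\<^sup>2 + 4 * lam (Suc k) * A k)) / 2"
    and y_def: "\<And>k. y k = (A k / (A k + a (Suc k))) *\<^sub>R x k
                         + (a (Suc k) / (A k + a (Suc k))) *\<^sub>R v k"
    and inexact: "\<And>k. mnorm M (x (Suc k) - (y k - lam (Suc k) *\<^sub>R (mp_pinv M *v g (x (Suc k)))))
                       \<le> \<sigma> * mnorm M (x (Suc k) - y k)"
    and v_step: "\<And>k. v (Suc k) = v k - a (Suc k) *\<^sub>R (mp_pinv M *v g (x (Suc k)))"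
    and A_step: "\<And>k. A (Suc k) = A k + a (Suc k)"
  shows "\<forall>k. mnorm M (x k - xs) \<le> (2 - \<sigma>) / (1 - \<sigma>) *
              sqrt (2 * (A 0 * (f (x 0) - f xs) + 1/2 * (mnorm M (v 0 - xs))\<^sup>2))
          \<and> mnorm M (v k - xs) \<le>
              sqrt (2 * (A 0 * (f (x 0) - f xs) + 1/2 * (mnorm M (v 0 - xs))\<^sup>2))"
proof -
  interpret monteiro_svaiter M f g xs \<sigma> A a lam x v y
    using assms strictly_convex_imp_convex_on[OF f_sconv] by unfold_locales auto
  show ?thesis
    using x_dist_le v_dist_le unfolding potential_def by blast
qed

end
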